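(* For all $t\geq 0$, \[ F_\alpha(t) = E\left(\frac{1}{1+Q_\alpha/t}\right) \geq \max\left\{\frac{1/2}{1+1/t},\ \frac{1+(1/t-3)\mathbf{Pr}(Q_\alpha\leq t)/2}{1+1/t}\right\}. \] In particular, when $t\leq 1/3$, $F_\alpha(t) \geq \frac{1}{1+1/t}$. In addition, for any fixed $t\geq 0$, $\lim_{\alpha\rightarrow 0} F_\alpha(t) = \frac{1}{1+1/t}$.
   Context: Let $S(\alpha,1)$ denote the symmetric $\alpha$-stable distribution with unit scale, i.e. with characteristic function $E(e^{\sqrt{-1}Zt}) = e^{-|t|^\alpha}$, $0<\alpha<1$. Such a variable can be generated (Chambers–Mallows–Stuck procedure) from independent $w\sim \exp(1)$ and $u\sim \mathrm{unif}(-\pi/2,\pi/2)$ as $Z = \frac{\sin(\alpha u)}{(\cos u)^{1/\alpha}}\Big[\frac{\cos(u-\alpha u)}{w}\Big]^{(1-\alpha)/\alpha}$. Let $S_1,S_2$ be i.i.d. $S(\alpha,1)$ generated this way from independent $(w_1,u_1)$ and $(w_2,u_2)$. Define $F_\alpha(t) = \mathbf{Pr}\left(|S_2/S_1|^{\alpha/(1-\alpha)}\leq t\right)$ for $t\geq 0$. Then $|S_2/S_1|^{\alpha/(1-\alpha)} = Q_\alpha \frac{w_1}{w_2}$, where $Q_\alpha = Q_\alpha(u_1,u_2) = \left|\frac{q_\alpha(u_2)}{q_\alpha(u_1)}\right|^{\alpha/(1-\alpha)}$ and $q_\alpha(u) = \frac{\sin(\alpha u)}{\cos^{1/\alpha}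 u}\left[\cos(u-\alpha u)\right]^{(1-\alpha)/\alpha}$. *)

theory Defs
  imports "HOL-Probability.Probability"
begin

definition Unif :: "real measure" where
  "Unif = uniform_measure lborel {-(pi/2)<..<pi/2}"

definition Expo :: "real measure" where
  "Expo = density lborel (exponential_density 1)"

text \<open>Chambers--Mallows--Stuck generator Z(w,u) for S(alpha,1).\<close>
definition CMS :: "real \<Rightarrow> real \<Rightarrow> real \<Rightarrow> real" where
  "CMS \<alpha> w u = sin (\<alpha> * u) / (cos u) powr (1 / \<alpha>)
      * (cos (u - \<alpha> * u) / w) powr ((1 - \<alpha>) / \<alpha>)"

definition Omega :: "((real \<times> real) \<times> (real \<times> real)) measure" where
  "Omega = (Expo \<Otimes>\<^sub>M Unif) \<Otimes>\<^sub>M (Expo \<Otimes>\<^sub>M Unif)"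

definition F :: "real \<Rightarrow> real \<Rightarrow> real" where
  "F \<alpha> t = measure Omega
     {\<omega> \<in> space Omega.
        \<bar>CMS \<alpha> (fst (snd \<omega>)) (snd (snd \<omega>)) / CMS \<alpha> (fst (fst \<omega>)) (snd (fst \<omega>))\<bar>
          powr (\<alpha> / (1 - \<alpha>)) \<le> t}"

definition q :: "real \<Rightarrow> real \<Rightarrow> real" where
  "q \<alpha> u = sin (\<alpha> * u) / (cos u) powr (1 / \<alpha>)
      * (cos (u - \<alpha> * u)) powr ((1 - \<alpha>) / \<alpha>)"

definition Q :: "real \<Rightarrow> real \<Rightarrow> real \<Rightarrow> real" where
  "Q \<alpha> u1 u2 = \<bar>q \<alpha> u2 / q \<alpha> u1\<bar> powr (\<alpha> / (1 - \<alpha>))"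

definition UU :: "(real \<times> real) measure" where
  "UU = Unif \<Otimes>\<^sub>M Unif"

end

theory Submission
  imports Defs "HOL-Real_Asymp.Real_Asymp"
begin

text \<open>Given the angles, \<bar>S2/S1\<bar>^(\<alpha>/(1-\<alpha>)) = Q w1/w2 with w1, w2 independent exp(1), and
  Pr(Q w1/w2 \<le> t) = t/(t+Q); integrating over the angles gives F as the mean of t/(t+Q).
  Exchanging u1 and u2 replaces Q by 1/Q, so 2F is the mean of \<phi>(Q) + \<phi>(1/Q) with
  \<phi>(x) = t/(t+x), and both lower bounds are integrated pointwise inequalities for
  \<phi>(x) + \<phi>(1/x). As \<alpha> \<rightarrow> 0, \<alpha> ln \<bar>q \<alpha> u\<bar> \<rightarrow> 0, hence Q \<rightarrow> 1 almost surely, and dominated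
  convergence gives F \<alpha> t \<rightarrow> t/(t+1).\<close>

section \<open>The exponential and uniform laws\<close>

abbreviation angles :: "real set" where
  "angles \<equiv> {-(pi/2)<..<pi/2}"

lemma prob_space_Expo: "prob_space Expo"
  unfolding Expo_def by (rule prob_space_exponential_density) simp

lemma sets_Expo [simp, measurable_cong]: "sets Expo = sets borel"
  by (simp add: Expo_def)

lemma space_Expo [simp]: "space Expo = UNIV"
  by (simp add: Expo_def)

lemma prob_space_Unif: "prob_space Unif"
  unfolding Unif_def by (rule prob_space_uniform_measure) auto

lemma sets_Unif [simp, measurable_cong]: "sets Unif = sets borel"
  by (simp add: Unif_def)

lemma space_Unif [simp]: "space Unif = UNIV"
  by (simp add: Unif_def)

interpretation Expo_Unif: pair_prob_space Expo Unif
  by (intro pair_prob_space.intro pair_sigma_finite.intro prob_space_Expo prob_space_Unif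
      prob_space_imp_sigma_finite)

interpretation Unif_Unif: pair_prob_space Unif Unif
  by (intro pair_prob_space.intro pair_sigma_finite.intro prob_space_Unif prob_space_imp_sigma_finite)

lemma space_UU [simp]: "space UU = UNIV"
  by (simp add: UU_def space_pair_measure)

lemma sets_UU [measurable_cong]: "sets UU = sets (Unif \<Otimes>\<^sub>M Unif)"
  by (simp only: UU_def)

interpretation UU: prob_space UU
  unfolding UU_def by (rule Unif_Unif.prob_space_axioms)

lemma emeasure_Expo_greaterThan:
  assumes "0 \<le> a"
  shows "emeasure Expo {a<..} = ennreal (exp (- a))"
proof -
  have "measure Expo {..a} = 1 - exp (- a)"
    using assms by (simp add: Expo_def measure_def emeasure_erlang_density erlang_CDF_def)
  moreover have "measure Expo {a<..} = 1 - measure Expo {..a}"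
    using Expo_Unif.M1.prob_compl[of "{..a}"] by (simp add: Compl_eq_Diff_UNIV[symmetric])
  ultimately show ?thesis by (simp add: Expo_Unif.M1.emeasure_eq_measure)
qed

lemma AE_Expo_pos_neq: "AE w in Expo. 0 < w \<and> w \<noteq> c"
proof -
  have "AE w in lborel. w \<noteq> 0 \<and> w \<noteq> c"
    using AE_lborel_singleton[of 0] AE_lborel_singleton[of c] by eventually_elim auto
  then have "AE w in lborel. 0 < exponential_density 1 w \<longrightarrow> 0 < w \<and> w \<noteq> c"
    by eventually_elim (auto simp: exponential_density_def)
  then show ?thesis
    unfolding Expo_def by (subst AE_density) auto
qed

lemma AE_Expo_pos: "AE w in Expo. 0 < w"
  using AE_Expo_pos_neq[of 0] by eventually_elim simp

lemma AE_Unif_angles: "AE u in Unif. u \<in> angles \<and> u \<noteq> 0"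
  unfolding Unif_def
  by (rule AE_uniform_measureI) (auto intro!: eventually_mono[OF AE_lborel_singleton[of 0]])

lemma AE_UU_angles: "AE p in UU. fst p \<in> angles \<and> fst p \<noteq> 0 \<and> snd p \<in> angles \<and> snd p \<noteq> 0"
  unfolding UU_def
proof (rule Unif_Unif.AE_pair_measure)
  show "AE u1 in Unif. AE u2 in Unif.
      fst (u1, u2) \<in> angles \<and> fst (u1, u2) \<noteq> 0 \<and> snd (u1, u2) \<in> angles \<and> snd (u1, u2) \<noteq> 0"
    using AE_Unif_angles by eventually_elim (use AE_Unif_angles in \<open>auto elim: eventually_mono\<close>)
qed measurable

text \<open>The integrand times the density of exp(1) is 1/(1+c) times the density of exp(1+c).\<close>
lemma nn_integral_Expo_exp:
  assumes "0 \<le> c"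
  shows "(\<integral>\<^sup>+ w. ennreal (exp (- c * w)) \<partial>Expo) = ennreal (1 / (1 + c))"
proof -
  interpret E: prob_space "density lborel (exponential_density (1 + c))"
    by (rule prob_space_exponential_density) (use assms in simp)
  have "exponential_density 1 w * exp (- c * w) = 1 / (1 + c) * exponential_density (1 + c) w" for w
    using assms by (simp add: exponential_density_def mult_exp_exp field_simps)
  then have "(\<integral>\<^sup>+ w. ennreal (exp (- c * w)) \<partial>Expo)
      = (\<integral>\<^sup>+ w. ennreal (1 / (1 + c)) * ennreal (exponential_density (1 + c) w) \<partial>lborel)"
    unfolding Expo_def using assms
    by (subst nn_integral_density) (auto intro!: nn_integral_cong simp: ennreal_mult'[symmetric])
  also have "\<dots> = ennreal (1 / (1 + c)) * emeasure (density lborel (exponential_density (1 + c))) UNIV"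
    by (subst nn_integral_cmult) (auto simp: emeasure_density)
  finally show ?thesis using E.emeasure_space_1 by simp
qed

section \<open>The Chambers--Mallows--Stuck ratio\<close>

lemma cos_pos_angles: "u \<in> angles \<Longrightarrow> 0 < cos u"
  by (auto intro!: cos_gt_zero_pi)

lemma cos_scaled_angle_pos:
  assumes "0 \<le> \<alpha>" "\<alpha> \<le> 1" "u \<in> angles"
  shows "0 < cos (u - \<alpha> * u)"
proof -
  have "\<bar>(1 - \<alpha>) * u\<bar> \<le> \<bar>u\<bar>"
    using assms by (auto simp: abs_mult intro!: mult_left_le_one_le)
  then show ?thesis
    using assms(3) cos_gt_zero_pi[of "(1 - \<alpha>) * u"] by (auto simp: algebra_simps)
qed

lemma sin_scaled_angle_nonzero:
  assumes "0 < \<alpha>" "\<alpha> \<le> 1" "u \<in> angles" "u \<noteq> 0"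
  shows "sin (\<alpha> * u) \<noteq> 0"
proof -
  have "\<bar>\<alpha> * u\<bar> < pi"
    using assms by (auto simp: abs_mult intro!: order.strict_trans1[OF mult_left_le_one_le[of "\<bar>u\<bar>" \<alpha>]])
  then show ?thesis
    using assms sin_zero_pi_iff by auto
qed

lemma q_nonzero:
  "0 < \<alpha> \<Longrightarrow> \<alpha> \<le> 1 \<Longrightarrow> u \<in> angles \<Longrightarrow> u \<noteq> 0 \<Longrightarrow> q \<alpha> u \<noteq> 0"
  using sin_scaled_angle_nonzero[of \<alpha> u] cos_pos_angles[of u] cos_scaled_angle_pos[of \<alpha> u]
  by (simp add: q_def)

lemma Q_nonneg: "0 \<le> Q \<alpha> u1 u2"
  by (simp add: Q_def)

lemma Q_pos:
  "0 < \<alpha> \<Longrightarrow> \<alpha> \<le> 1 \<Longrightarrow> u1 \<in> angles \<Longrightarrow> u1 \<noteq> 0 \<Longrightarrow> u2 \<in> angles \<Longrightarrow> u2 \<noteq> 0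
    \<Longrightarrow> 0 < Q \<alpha> u1 u2"
  using q_nonzero[of \<alpha> u1] q_nonzero[of \<alpha> u2] by (simp add: Q_def)

lemma Q_swap: "Q \<alpha> u2 u1 = inverse (Q \<alpha> u1 u2)"
  unfolding Q_def by (simp add: powr_divide)

lemma CMS_eq_q:
  assumes "0 \<le> \<alpha>" "\<alpha> \<le> 1" "u \<in> angles" "0 \<le> w"
  shows "CMS \<alpha> w u = q \<alpha> u / w powr ((1 - \<alpha>) / \<alpha>)"
  using cos_scaled_angle_pos[OF assms(1-3)] assms(4) by (simp add: CMS_def q_def powr_divide)

lemma CMS_ratio_eq_Q:
  assumes \<alpha>: "0 < \<alpha>" "\<alpha> < 1" and u: "u1 \<in> angles" "u2 \<in> angles" and w: "0 < w1" "0 < w2"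
  shows "\<bar>CMS \<alpha> w2 u2 / CMS \<alpha> w1 u1\<bar> powr (\<alpha> / (1 - \<alpha>)) = Q \<alpha> u1 u2 * (w1 / w2)"
proof -
  let ?b = "(1 - \<alpha>) / \<alpha>" and ?a = "\<alpha> / (1 - \<alpha>)"
  have "\<bar>CMS \<alpha> w2 u2 / CMS \<alpha> w1 u1\<bar> = \<bar>q \<alpha> u2 / q \<alpha> u1\<bar> * (w1 / w2) powr ?b"
    using \<alpha> u w by (simp add: CMS_eq_q powr_divide abs_mult field_simps)
  then have "\<bar>CMS \<alpha> w2 u2 / CMS \<alpha> w1 u1\<bar> powr ?a = Q \<alpha> u1 u2 * ((w1 / w2) powr ?b) powr ?a"
    unfolding Q_def by (simp add: powr_mult[symmetric] abs_mult)
  also have "((w1 / w2) powr ?b) powr ?a = w1 / w2"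
    using \<alpha> w by (simp add: powr_powr)
  finally show ?thesis .
qed

lemma q_measurable [measurable]:
  assumes [measurable]: "f \<in> borel_measurable M"
  shows "(\<lambda>x. q \<alpha> (f x)) \<in> borel_measurable M"
  unfolding q_def by measurable

lemma Q_measurable [measurable]:
  assumes [measurable]: "f \<in> borel_measurable M" "g \<in> borel_measurable M"
  shows "(\<lambda>x. Q \<alpha> (f x) (g x)) \<in> borel_measurable M"
  unfolding Q_def by measurable

lemma CMS_measurable [measurable]:
  assumes [measurable]: "f \<in> borel_measurable M" "g \<in> borel_measurable M"
  shows "(\<lambda>x. CMS \<alpha> (f x) (g x)) \<in> borel_measurable M"
  unfolding CMS_def by measurable

section \<open>Integrating out the exponential variables\<close>

text \<open>Given w1, the event is w2 \<ge> c w1/t, of probability exp(-c w1/t); averaging over w1 is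
  the Laplace transform of exp(1) at c/t.\<close>
lemma nn_integral_Expo_ratio_le:
  assumes c: "0 < c" and t: "0 \<le> t"
  shows "(\<integral>\<^sup>+ w1. \<integral>\<^sup>+ w2. of_bool (c * (w1 / w2) \<le> t) \<partial>Expo \<partial>Expo) = ennreal (t / (t + c))"
proof (cases "t = 0")
  case True
  have "(\<integral>\<^sup>+ w1. \<integral>\<^sup>+ w2. of_bool (c * (w1 / w2) \<le> t) \<partial>Expo \<partial>Expo) = (\<integral>\<^sup>+ w1. 0 \<partial>Expo)"
    using AE_Expo_pos
  proof (rule nn_integral_cong_AE[OF eventually_mono])
    fix w1 :: real assume "0 < w1"
    then show "(\<integral>\<^sup>+ w2. of_bool (c * (w1 / w2) \<le> t) \<partial>Expo) = 0"
      using AE_Expo_pos c True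
      by (subst nn_integral_0_iff_AE) (auto elim!: eventually_mono simp: divide_le_0_iff mult_le_0_iff)
  qed
  then show ?thesis using True by simp
next
  case False
  with t have t: "0 < t" by simp
  have "(\<integral>\<^sup>+ w1. \<integral>\<^sup>+ w2. of_bool (c * (w1 / w2) \<le> t) \<partial>Expo \<partial>Expo)
      = (\<integral>\<^sup>+ w1. ennreal (exp (- (c / t) * w1)) \<partial>Expo)"
    using AE_Expo_pos
  proof (rule nn_integral_cong_AE[OF eventually_mono])
    fix w1 :: real assume w1: "0 < w1"
    have "(\<integral>\<^sup>+ w2. of_bool (c * (w1 / w2) \<le> t) \<partial>Expo) = (\<integral>\<^sup>+ w2. indicator {c * w1 / t<..} w2 \<partial>Expo)"
      using AE_Expo_pos_neq[of "c * w1 / t"]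
      by (rule nn_integral_cong_AE[OF eventually_mono]) (use t in \<open>auto simp: field_simps\<close>)
    also have "\<dots> = ennreal (exp (- (c / t) * w1))"
      using c t w1 by (simp add: emeasure_Expo_greaterThan)
    finally show "(\<integral>\<^sup>+ w2. of_bool (c * (w1 / w2) \<le> t) \<partial>Expo) = ennreal (exp (- (c / t) * w1))" .
  qed
  also have "\<dots> = ennreal (1 / (1 + c / t))"
    using c t by (intro nn_integral_Expo_exp) simp
  also have "1 / (1 + c / t) = t / (t + c)"
    using c t by (simp add: field_simps)
  finally show ?thesis .
qed

lemma nn_integral_Omega:
  assumes f [measurable]: "f \<in> borel_measurable Omega"
  shows "(\<integral>\<^sup>+ \<omega>. f \<omega> \<partial>Omega)
    = (\<integral>\<^sup>+ u1. \<integral>\<^sup>+ u2. \<integral>\<^sup>+ w1. \<integral>\<^sup>+ w2. f ((w1, u1), (w2, u2)) \<partial>Expo \<partial>Expo \<partial>Unif \<partial>Unif)"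
proof -
  have [measurable]: "f \<in> borel_measurable ((Expo \<Otimes>\<^sub>M Unif) \<Otimes>\<^sub>M (Expo \<Otimes>\<^sub>M Unif))"
    using f by (simp add: Omega_def)
  have "(\<integral>\<^sup>+ \<omega>. f \<omega> \<partial>Omega)
      = (\<integral>\<^sup>+ x. \<integral>\<^sup>+ y. f (x, y) \<partial>(Expo \<Otimes>\<^sub>M Unif) \<partial>(Expo \<Otimes>\<^sub>M Unif))"
    unfolding Omega_def by (rule Expo_Unif.nn_integral_fst[symmetric]) simp
  also have "\<dots> = (\<integral>\<^sup>+ x. \<integral>\<^sup>+ u2. \<integral>\<^sup>+ w2. f (x, (w2, u2)) \<partial>Expo \<partial>Unif \<partial>(Expo \<Otimes>\<^sub>M Unif))"
    by (intro nn_integral_cong Expo_Unif.nn_integral_snd[symmetric]) simp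
  also have "\<dots> = (\<integral>\<^sup>+ u1. \<integral>\<^sup>+ w1. \<integral>\<^sup>+ u2. \<integral>\<^sup>+ w2. f ((w1, u1), (w2, u2)) \<partial>Expo \<partial>Unif \<partial>Expo \<partial>Unif)"
    by (rule Expo_Unif.nn_integral_snd[symmetric]) simp
  also have "\<dots> = (\<integral>\<^sup>+ u1. \<integral>\<^sup>+ u2. \<integral>\<^sup>+ w1. \<integral>\<^sup>+ w2. f ((w1, u1), (w2, u2)) \<partial>Expo \<partial>Expo \<partial>Unif \<partial>Unif)"
    by (intro nn_integral_cong Expo_Unif.Fubini'[symmetric]) simp
  finally show ?thesis .
qed

lemma F_eq_integral:
  assumes \<alpha>: "0 < \<alpha>" "\<alpha> < 1" and t: "0 \<le> t"
  shows "F \<alpha> t = (\<integral>p. t / (t + Q \<alpha> (fst p) (snd p)) \<partial>UU)"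
proof -
  define S where "S = {\<omega> \<in> space Omega.
    \<bar>CMS \<alpha> (fst (snd \<omega>)) (snd (snd \<omega>)) / CMS \<alpha> (fst (fst \<omega>)) (snd (fst \<omega>))\<bar>
      powr (\<alpha> / (1 - \<alpha>)) \<le> t}"
  have S [measurable]: "S \<in> sets Omega"
    unfolding S_def Omega_def by measurable
  have inner: "(\<integral>\<^sup>+ w1. \<integral>\<^sup>+ w2. indicator S ((w1, u1), (w2, u2)) \<partial>Expo \<partial>Expo)
      = ennreal (t / (t + Q \<alpha> u1 u2))"
    if u: "u1 \<in> angles" "u1 \<noteq> 0" "u2 \<in> angles" "u2 \<noteq> 0" for u1 u2
  proof -
    have "(\<integral>\<^sup>+ w1. \<integral>\<^sup>+ w2. indicator S ((w1, u1), (w2, u2)) \<partial>Expo \<partial>Expo)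
        = (\<integral>\<^sup>+ w1. \<integral>\<^sup>+ w2. of_bool (Q \<alpha> u1 u2 * (w1 / w2) \<le> t) \<partial>Expo \<partial>Expo)"
      using AE_Expo_pos
    proof (rule nn_integral_cong_AE[OF eventually_mono])
      fix w1 :: real assume "0 < w1"
      then show "(\<integral>\<^sup>+ w2. indicator S ((w1, u1), (w2, u2)) \<partial>Expo)
          = (\<integral>\<^sup>+ w2. of_bool (Q \<alpha> u1 u2 * (w1 / w2) \<le> t) \<partial>Expo)"
        using AE_Expo_pos CMS_ratio_eq_Q[OF \<alpha> u(1,3)]
        by (intro nn_integral_cong_AE) (auto elim!: eventually_mono simp: S_def Omega_def space_pair_measure)
    qed
    also have "\<dots> = ennreal (t / (t + Q \<alpha> u1 u2))"
      using Q_pos[OF \<alpha>(1) less_imp_le[OF \<alpha>(2)] u] t by (rule nn_integral_Expo_ratio_le)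
    finally show ?thesis .
  qed
  have inner_AE: "AE u2 in Unif. (\<integral>\<^sup>+ w1. \<integral>\<^sup>+ w2. indicator S ((w1, u1), (w2, u2)) \<partial>Expo \<partial>Expo)
      = ennreal (t / (t + Q \<alpha> u1 u2))"
    if "u1 \<in> angles" "u1 \<noteq> 0" for u1
    using AE_Unif_angles by eventually_elim (intro inner that; simp)
  have "emeasure Omega S
      = (\<integral>\<^sup>+ u1. \<integral>\<^sup>+ u2. \<integral>\<^sup>+ w1. \<integral>\<^sup>+ w2. indicator S ((w1, u1), (w2, u2)) \<partial>Expo \<partial>Expo \<partial>Unif \<partial>Unif)"
    by (simp add: nn_integral_Omega[symmetric])
  also have "\<dots> = (\<integral>\<^sup>+ u1. \<integral>\<^sup>+ u2. ennreal (t / (t + Q \<alpha> u1 u2)) \<partial>Unif \<partial>Unif)"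
    by (rule nn_integral_cong_AE[OF eventually_mono[OF AE_Unif_angles]])
       (intro nn_integral_cong_AE inner_AE; simp)
  also have "\<dots> = (\<integral>\<^sup>+ p. ennreal (t / (t + Q \<alpha> (fst p) (snd p))) \<partial>UU)"
    unfolding UU_def
    by (subst sigma_finite_measure.nn_integral_fst[OF prob_space_imp_sigma_finite[OF prob_space_Unif],
          symmetric]) auto
  finally have "F \<alpha> t = enn2real (\<integral>\<^sup>+ p. ennreal (t / (t + Q \<alpha> (fst p) (snd p))) \<partial>UU)"
    by (simp add: F_def S_def measure_def)
  also have "\<dots> = (\<integral>p. t / (t + Q \<alpha> (fst p) (snd p)) \<partial>UU)"
    using t Q_nonneg by (intro enn2real_nn_integral_eq_integral) (auto simp: UU_def)
  finally show ?thesis .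
qed

section \<open>Lower bounds\<close>

lemma half_le_div_add:
  fixes t y :: real
  assumes "0 < y" "y \<le> t"
  shows "1/2 \<le> t / (t + y)"
  using assms by (simp add: field_simps)

lemma div_add_le_div_add_inverse:
  fixes t x :: real
  assumes x: "0 < x" and t: "0 \<le> t"
  shows "t / (t + 1) \<le> t / (t + x) + t / (t + inverse x)"
proof -
  have nonneg: "0 \<le> t / (t + x)" "0 \<le> t / (t + inverse x)"
    using x t by auto
  show ?thesis
  proof (cases "x \<le> 1")
    case True
    then have "t / (t + 1) \<le> t / (t + x)"
      using x t by (intro divide_left_mono) auto
    then show ?thesis
      using nonneg by linarith
  next
    case False
    then have "0 < inverse x" "inverse x \<le> 1"
      using x by (simp_all add: inverse_le_1_iff)
    then have "t / (t + 1) \<le> t / (t + inverse x)"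
      using t by (intro divide_left_mono mult_pos_pos add_nonneg_pos) simp_all
    then show ?thesis
      using nonneg by linarith
  qed
qed

lemma two_div_le_div_add_inverse:
  fixes t x :: real
  assumes x: "0 < x" and t: "0 \<le> t" "t \<le> 1"
  shows "2 * t / (t + 1) \<le> t / (t + x) + t / (t + inverse x)"
proof -
  have inv: "t / (t + inverse x) = t * x / (t * x + 1)"
    using x by (simp add: field_simps)
  have pos: "0 < t + x" "0 < t * x + 1" "0 < t + 1"
    using x t mult_nonneg_nonneg[of t x] by linarith+
  then have "t / (t + x) + t * x / (t * x + 1) - 2 * t / (t + 1)
      = t * (1 - t) * (x - 1)^2 / ((t + x) * (t * x + 1) * (t + 1))"
    by (simp add: divide_simps) (simp add: algebra_simps power2_eq_square)
  moreover have "0 \<le> t * (1 - t) * (x - 1)^2 / ((t + x) * (t * x + 1) * (t + 1))"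
    using pos t by (intro divide_nonneg_pos mult_nonneg_nonneg mult_pos_pos) simp_all
  ultimately show ?thesis
    unfolding inv by linarith
qed

lemma div_add_inverse_indicator_bound:
  fixes t x :: real
  assumes x: "0 < x" and t: "0 \<le> t"
  shows "2 * t + (1 - 3 * t) / 2 * (of_bool (x \<le> t) + of_bool (inverse x \<le> t))
    \<le> (t + 1) * (t / (t + x) + t / (t + inverse x))"
proof -
  have nonneg: "0 \<le> t / (t + x)" "0 \<le> t / (t + inverse x)"
    using x t by auto
  consider (both) "x \<le> t" "inverse x \<le> t" | (one) "x \<le> t \<longleftrightarrow> \<not> inverse x \<le> t"
    | (none) "\<not> x \<le> t" "\<not> inverse x \<le> t"
    by blast
  then show ?thesis
  proof cases
    case both
    have "1 \<le> t"
      using both one_le_inverse[OF x] by (cases "x \<le> 1") auto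
    moreover have "0 \<le> (t + 1) * (t / (t + x) + t / (t + inverse x))"
      using nonneg t by simp
    moreover have "2 * t + (1 - 3 * t) / 2 * (of_bool (x \<le> t) + of_bool (inverse x \<le> t)) = 1 - t"
      using both by (simp add: field_simps)
    ultimately show ?thesis
      by linarith
  next
    case one
    then have "2 * t + (1 - 3 * t) / 2 * (of_bool (x \<le> t) + of_bool (inverse x \<le> t)) = (t + 1) * (1/2)"
      by (cases "x \<le> t") (simp_all add: field_simps)
    moreover have "1/2 \<le> t / (t + x) \<or> 1/2 \<le> t / (t + inverse x)"
      using one x half_le_div_add[of x t] half_le_div_add[of "inverse x" t] by (cases "x \<le> t") auto
    then have "1/2 \<le> t / (t + x) + t / (t + inverse x)"
      using nonneg by linarith
    then have "(t + 1) * (1/2) \<le> (t + 1) * (t / (t + x) + t / (t + inverse x))"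
      using t by (intro mult_left_mono) auto
    ultimately show ?thesis
      by linarith
  next
    case none
    have "t \<le> 1"
      using none x inverse_less_1_iff[of x] by (cases "x \<le> 1") auto
    then have "2 * t / (t + 1) \<le> t / (t + x) + t / (t + inverse x)"
      by (rule two_div_le_div_add_inverse[OF x t])
    then have "2 * t \<le> (t + 1) * (t / (t + x) + t / (t + inverse x))"
      using t by (subst (asm) pos_divide_le_eq) (auto simp: mult.commute)
    then show ?thesis
      using none by simp
  qed
qed

lemma integral_UU_add_swap:
  fixes h :: "real \<times> real \<Rightarrow> real"
  assumes h: "integrable UU h"
  shows "integrable UU (\<lambda>p. h p + h (snd p, fst p))"
    and "(\<integral>p. h p + h (snd p, fst p) \<partial>UU) = 2 * (\<integral>p. h p \<partial>UU)"
proof -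
  have swap: "integrable UU (\<lambda>p. h (snd p, fst p))" "(\<integral>p. h (snd p, fst p) \<partial>UU) = (\<integral>p. h p \<partial>UU)"
    using Unif_Unif.integrable_product_swap[of h] Unif_Unif.integral_product_swap[of h] h
    by (simp_all add: UU_def split_beta')
  then show "integrable UU (\<lambda>p. h p + h (snd p, fst p))"
    using h by simp
  show "(\<integral>p. h p + h (snd p, fst p) \<partial>UU) = 2 * (\<integral>p. h p \<partial>UU)"
    using h swap by simp
qed

lemma AE_UU_Q_pos: "0 < \<alpha> \<Longrightarrow> \<alpha> \<le> 1 \<Longrightarrow> AE p in UU. 0 < Q \<alpha> (fst p) (snd p)"
  using AE_UU_angles by eventually_elim (simp add: Q_pos)

lemma F_symmetrized:
  assumes \<alpha>: "0 < \<alpha>" "\<alpha> < 1" and t: "0 \<le> t"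
  defines "f \<equiv> \<lambda>p. t / (t + Q \<alpha> (fst p) (snd p)) + t / (t + inverse (Q \<alpha> (fst p) (snd p)))"
  shows "integrable UU f" and "(\<integral>p. f p \<partial>UU) = 2 * F \<alpha> t"
proof -
  have bounded: "\<bar>t / (t + Q \<alpha> u1 u2)\<bar> \<le> 1" for u1 u2
    using t Q_nonneg[of \<alpha> u1 u2] by (cases "t = 0") (auto simp: divide_le_eq_1)
  have ratio: "integrable UU (\<lambda>p. t / (t + Q \<alpha> (fst p) (snd p)))"
    using bounded by (intro UU.integrable_const_bound[where B=1]) (auto simp: UU_def)
  show "integrable UU f" "(\<integral>p. f p \<partial>UU) = 2 * F \<alpha> t"
    using integral_UU_add_swap[OF ratio] F_eq_integral[OF \<alpha> t] by (simp_all add: f_def Q_swap[symmetric])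
qed

lemma measure_UU_symmetrized:
  fixes \<alpha> t :: real
  defines "i \<equiv> \<lambda>p. of_bool (Q \<alpha> (fst p) (snd p) \<le> t) + of_bool (inverse (Q \<alpha> (fst p) (snd p)) \<le> t)"
  shows "integrable UU i" and "(\<integral>p. i p \<partial>UU) = 2 * measure UU {p \<in> space UU. Q \<alpha> (fst p) (snd p) \<le> t}"
proof -
  define A where "A = {p \<in> space UU. Q \<alpha> (fst p) (snd p) \<le> t}"
  have [measurable]: "A \<in> sets UU"
    unfolding A_def UU_def by measurable
  have "integrable UU (indicat_real A)"
    by (intro UU.integrable_const_bound[where B=1]) auto
  moreover have "i = (\<lambda>p. indicat_real A p + indicat_real A (snd p, fst p))"
    by (auto simp: i_def A_def Q_swap[symmetric] indicator_def)
  ultimately show "integrable UU i" "(\<integral>p. i p \<partial>UU) = 2 * measure UU A"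
    using integral_UU_add_swap[of "indicat_real A"] by simp_all
qed

lemma F_ge_half:
  assumes \<alpha>: "0 < \<alpha>" "\<alpha> < 1" and t: "0 \<le> t"
  shows "(1/2) * t / (t + 1) \<le> F \<alpha> t"
proof -
  have "(\<integral>p. t / (t + 1) \<partial>UU)
      \<le> (\<integral>p. t / (t + Q \<alpha> (fst p) (snd p)) + t / (t + inverse (Q \<alpha> (fst p) (snd p))) \<partial>UU)"
  proof (rule integral_mono_AE')
    show "AE p in UU. t / (t + 1) \<le> t / (t + Q \<alpha> (fst p) (snd p)) + t / (t + inverse (Q \<alpha> (fst p) (snd p)))"
      using AE_UU_Q_pos[OF \<alpha>(1) less_imp_le[OF \<alpha>(2)]]
      by eventually_elim (rule div_add_le_div_add_inverse[OF _ t])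
    show "AE p in UU. 0 \<le> t / (t + Q \<alpha> (fst p) (snd p)) + t / (t + inverse (Q \<alpha> (fst p) (snd p)))"
      using AE_UU_Q_pos[OF \<alpha>(1) less_imp_le[OF \<alpha>(2)]] by eventually_elim (use t in simp)
  qed (rule F_symmetrized(1)[OF \<alpha> t])
  then have "t / (t + 1) \<le> 2 * F \<alpha> t"
    using F_symmetrized(2)[OF \<alpha> t] UU.prob_space by simp
  moreover have "(1/2) * t / (t + 1) = t / (t + 1) / 2"
    by simp
  ultimately show ?thesis
    by linarith
qed

lemma F_ge_measure_bound:
  assumes \<alpha>: "0 < \<alpha>" "\<alpha> < 1" and t: "0 \<le> t"
  defines "P \<equiv> measure UU {p \<in> space UU. Q \<alpha> (fst p) (snd p) \<le> t}"
  shows "t + (1 - 3 * t) * P / 2 \<le> (t + 1) * F \<alpha> t"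
proof -
  let ?f = "\<lambda>p. t / (t + Q \<alpha> (fst p) (snd p)) + t / (t + inverse (Q \<alpha> (fst p) (snd p)))"
  let ?i = "\<lambda>p. of_bool (Q \<alpha> (fst p) (snd p) \<le> t) + of_bool (inverse (Q \<alpha> (fst p) (snd p)) \<le> t)"
  have "(\<integral>p. 2 * t + (1 - 3 * t) / 2 * ?i p \<partial>UU) \<le> (\<integral>p. (t + 1) * ?f p \<partial>UU)"
  proof (rule integral_mono_AE)
    show "AE p in UU. 2 * t + (1 - 3 * t) / 2 * ?i p \<le> (t + 1) * ?f p"
      using AE_UU_Q_pos[OF \<alpha>(1) less_imp_le[OF \<alpha>(2)]]
      by eventually_elim (rule div_add_inverse_indicator_bound[OF _ t])
  qed (use F_symmetrized(1)[OF \<alpha> t] measure_UU_symmetrized(1)[of \<alpha> t] in simp_all)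
  then have "2 * t + (1 - 3 * t) * P \<le> 2 * ((t + 1) * F \<alpha> t)"
    using F_symmetrized[OF \<alpha> t] measure_UU_symmetrized[of \<alpha> t] UU.prob_space
    by (simp add: P_def)
  then show ?thesis
    by linarith
qed

section \<open>The limit \<alpha> \<rightarrow> 0\<close>

lemma tendsto_mult_ln_abs_sin:
  fixes u :: real
  assumes "u \<noteq> 0"
  shows "((\<lambda>a. a * ln \<bar>sin (a * u)\<bar>) \<longlongrightarrow> 0) (at_right 0)"
proof (cases "0 < u")
  case True
  then show ?thesis by real_asymp
next
  case False
  with assms have "u < 0" by simp
  then show ?thesis by real_asymp
qed

text \<open>Multiplying by \<alpha> cancels the exponents 1/\<alpha> and (1-\<alpha>)/\<alpha> of the cosine factors of q,
  and \<alpha> ln \<bar>sin (\<alpha> u)\<bar> \<rightarrow> 0.\<close>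
lemma tendsto_mult_ln_abs_q:
  assumes u: "u \<in> angles" "u \<noteq> 0"
  shows "((\<lambda>\<alpha>. \<alpha> * ln \<bar>q \<alpha> u\<bar>) \<longlongrightarrow> 0) (at_right 0)"
proof -
  have "\<forall>\<^sub>F \<alpha> in at_right 0. (\<alpha> * ln \<bar>sin (\<alpha> * u)\<bar>) - ln (cos u) + (1 - \<alpha>) * ln (cos (u - \<alpha> * u))
      = \<alpha> * ln \<bar>q \<alpha> u\<bar>"
    using eventually_at_right_real[OF zero_less_one]
  proof eventually_elim
    case (elim \<alpha>)
    then have \<alpha>: "0 < \<alpha>" "\<alpha> \<le> 1" by auto
    have "sin (\<alpha> * u) \<noteq> 0" "0 < cos u" "0 < cos (u - \<alpha> * u)"
      using sin_scaled_angle_nonzero[OF \<alpha> u] cos_pos_angles[OF u(1)]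
        cos_scaled_angle_pos[of \<alpha> u] \<alpha> u by auto
    then have "ln \<bar>q \<alpha> u\<bar>
        = ln \<bar>sin (\<alpha> * u)\<bar> - ln (cos u) / \<alpha> + (1 - \<alpha>) / \<alpha> * ln (cos (u - \<alpha> * u))"
      by (simp add: q_def abs_mult ln_mult ln_div)
    then show ?case
      using \<alpha> by (simp only:) (simp add: field_simps)
  qed
  moreover have "((\<lambda>\<alpha>. (\<alpha> * ln \<bar>sin (\<alpha> * u)\<bar>) - ln (cos u) + (1 - \<alpha>) * ln (cos (u - \<alpha> * u)))
      \<longlongrightarrow> 0 - ln (cos u) + (1 - 0) * ln (cos (u - 0 * u))) (at_right 0)"
    using cos_pos_angles[OF u(1)] by (intro tendsto_intros tendsto_mult_ln_abs_sin u) auto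
  ultimately show ?thesis
    by (simp add: Lim_transform_eventually)
qed

lemma tendsto_Q_at_right_0:
  assumes u: "u1 \<in> angles" "u1 \<noteq> 0" "u2 \<in> angles" "u2 \<noteq> 0"
  shows "((\<lambda>\<alpha>. Q \<alpha> u1 u2) \<longlongrightarrow> 1) (at_right 0)"
proof -
  have "\<forall>\<^sub>F \<alpha> in at_right 0. exp (((\<alpha> * ln \<bar>q \<alpha> u2\<bar>) - (\<alpha> * ln \<bar>q \<alpha> u1\<bar>)) / (1 - \<alpha>)) = Q \<alpha> u1 u2"
    using eventually_at_right_real[OF zero_less_one]
  proof eventually_elim
    case (elim \<alpha>)
    then have "q \<alpha> u1 \<noteq> 0" "q \<alpha> u2 \<noteq> 0"
      using q_nonzero u by auto
    then show ?case
      by (simp add: Q_def powr_def ln_div right_diff_distrib diff_divide_distrib)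
  qed
  moreover have "((\<lambda>\<alpha>. exp (((\<alpha> * ln \<bar>q \<alpha> u2\<bar>) - (\<alpha> * ln \<bar>q \<alpha> u1\<bar>)) / (1 - \<alpha>)))
      \<longlongrightarrow> exp ((0 - 0) / (1 - 0))) (at_right 0)"
    using tendsto_mult_ln_abs_q[OF u(1,2)] tendsto_mult_ln_abs_q[OF u(3,4)]
    by (intro tendsto_intros) auto
  ultimately show ?thesis
    by (simp add: Lim_transform_eventually)
qed

lemma tendsto_F_at_right_0:
  assumes t: "0 \<le> t"
  shows "((\<lambda>\<alpha>. F \<alpha> t) \<longlongrightarrow> t / (t + 1)) (at_right 0)"
proof -
  define s where "s x p = t / (t + Q (inverse x) (fst p) (snd p))" for x p
  have [measurable]: "s x \<in> borel_measurable UU" for x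
    unfolding s_def UU_def by measurable
  have bounded: "norm (s x p) \<le> 1" for x p
    using t Q_nonneg[of "inverse x" "fst p" "snd p"] by (cases "t = 0") (auto simp: s_def divide_le_eq_1)
  have "AE p in UU. ((\<lambda>x. s x p) \<longlongrightarrow> t / (t + 1)) at_top"
    using AE_UU_angles
  proof eventually_elim
    case (elim p)
    then have "((\<lambda>x. Q (inverse x) (fst p) (snd p)) \<longlongrightarrow> 1) at_top"
      using tendsto_Q_at_right_0[of "fst p" "snd p"] by (simp add: filterlim_at_right_to_top)
    then show ?case
      using t unfolding s_def by (intro tendsto_intros) auto
  qed
  then have "((\<lambda>x. \<integral>p. s x p \<partial>UU) \<longlongrightarrow> (\<integral>p. t / (t + 1) \<partial>UU)) at_top"
    using bounded by (intro integral_dominated_convergence_at_top[where w="\<lambda>_. 1"]) auto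
  moreover have "\<forall>\<^sub>F x in at_top. (\<integral>p. s x p \<partial>UU) = F (inverse x) t"
    using eventually_gt_at_top[of "1 :: real"]
    by eventually_elim (use t in \<open>simp add: s_def F_eq_integral inverse_less_1_iff\<close>)
  ultimately have "((\<lambda>x. F (inverse x) t) \<longlongrightarrow> t / (t + 1)) at_top"
    using UU.prob_space by (auto intro: Lim_transform_eventually)
  then show ?thesis
    by (simp add: filterlim_at_right_to_top)
qed

theorem lemma1:
  shows "(\<forall>\<alpha> t. 0 < \<alpha> \<and> \<alpha> < 1 \<and> 0 \<le> t \<longrightarrow>
      F \<alpha> t = (\<integral>p. t / (t + Q \<alpha> (fst p) (snd p)) \<partial>UU)
    \<and> F \<alpha> t \<ge> max ((1/2) * t / (t + 1))
          ((t + (1 - 3 * t) * measure UU {p \<in> space UU. Q \<alpha> (fst p) (snd p) \<le> t} / 2) / (t + 1)))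
  \<and> (\<forall>\<alpha> t. 0 < \<alpha> \<and> \<alpha> < 1 \<and> 0 \<le> t \<and> t \<le> 1/3 \<longrightarrow> F \<alpha> t \<ge> t / (t + 1))
  \<and> (\<forall>t. 0 \<le> t \<longrightarrow> ((\<lambda>\<alpha>. F \<alpha> t) \<longlongrightarrow> t / (t + 1)) (at_right 0))"
proof (intro conjI allI impI)
  fix \<alpha> t :: real
  assume "0 < \<alpha> \<and> \<alpha> < 1 \<and> 0 \<le> t"
  then show "F \<alpha> t = (\<integral>p. t / (t + Q \<alpha> (fst p) (snd p)) \<partial>UU)"
    by (simp add: F_eq_integral)
next
  fix \<alpha> t :: real
  assume "0 < \<alpha> \<and> \<alpha> < 1 \<and> 0 \<le> t"
  then show "F \<alpha> t \<ge> max ((1/2) * t / (t + 1))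
      ((t + (1 - 3 * t) * measure UU {p \<in> space UU. Q \<alpha> (fst p) (snd p) \<le> t} / 2) / (t + 1))"
    using F_ge_half[of \<alpha> t] F_ge_measure_bound[of \<alpha> t] by (simp add: pos_divide_le_eq mult.commute)
next
  fix \<alpha> t :: real
  assume h: "0 < \<alpha> \<and> \<alpha> < 1 \<and> 0 \<le> t \<and> t \<le> 1/3"
  then have "0 \<le> (1 - 3 * t) * measure UU {p \<in> space UU. Q \<alpha> (fst p) (snd p) \<le> t}"
    by simp
  then have "t \<le> (t + 1) * F \<alpha> t"
    using h F_ge_measure_bound[of \<alpha> t] by linarith
  with h show "F \<alpha> t \<ge> t / (t + 1)"
    by (simp add: pos_divide_le_eq mult.commute)
next
  fix t :: real
  assume "0 \<le> t"
  then show "((\<lambda>\<alpha>. F \<alpha> t) \<longlongrightarrow> t / (t + 1)) (at_right 0)"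
    by (rule tendsto_F_at_right_0)
qed

end
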